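(* Let $r\ge1$ and let $a_{-r},\dots,a_0$ be coefficients with $a_{-r}\ne0$ and $|a_0|<1$. Then for every integer $\ell\ge0$ and every $z\in\overline{\mathcal U}$, $\det K_{0,r-1}(z)\neq 0$ and \[ \frac{\det K_{\ell,\ell+r-1}(z)}{\det K_{0,r-1}(z)}=(-1)^{\ell r}\left(\frac{a_{-r}}{a_0-z}\right)^{\ell}. \]
   Context: $\overline{\mathcal U}=\{z\in\mathbb C:|z|\ge1\}$. For $z\in\overline{\mathcal U}$, let $\kappa_1,\dots,\kappa_M$ be the distinct roots of the degree-$r$ equation $z\kappa^r=\sum_{k=-r}^0 a_k\kappa^{r+k}$ in $\kappa$, with multiplicities $\beta_1,\dots,\beta_M$, $\beta_1+\dots+\beta_M=r$. For integers $-r\le i\le j$, $K_{i,j}(z)\in\mathcal M_{j-i+1,r}(\mathbb C)$ is the matrix whose columns, indexed by pairs $(s,q)$ with $1\le s\le M$, $0\le q\le\beta_s-1$ and taken in some fixed order (the same for all $i,j$), are the vectors $(\ell'^{\,q}\kappa_s^{\ell'})_{\ell'=i,\dots,j}$, with the convention $0^0=1$. *)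

theory Defs
  imports "HOL-Computational_Algebra.Polynomial" "Jordan_Normal_Form.Determinant"
begin

definition char_poly :: "(int \<Rightarrow> complex) \<Rightarrow> nat \<Rightarrow> complex \<Rightarrow> complex poly" where
  "char_poly a r z = monom z r - (\<Sum>k\<in>{-int r..0}. monom (a k) (nat (int r + k)))"

definition K_cols :: "(int \<Rightarrow> complex) \<Rightarrow> nat \<Rightarrow> complex \<Rightarrow> (complex \<times> nat) set" where
  "K_cols a r z = {(\<kappa>, q). poly (char_poly a r z) \<kappa> = 0 \<and> q < order \<kappa> (char_poly a r z)}"

text \<open>K_{i,j}(z) with columns ordered by the enumeration e of K_cols (column c is e c);
  row number m corresponds to l' = i + m; entry l'^q kappa^l' (Isabelle: 0^0 = 1).\<close>
definition K_mat :: "nat \<Rightarrow> (nat \<Rightarrow> complex \<times> nat) \<Rightarrow> int \<Rightarrow> int \<Rightarrow> complex mat" where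
  "K_mat r e i j = mat (nat (j - i + 1)) r
     (\<lambda>(m, c). (of_int (i + int m)) ^ (snd (e c)) * (fst (e c)) powi (i + int m))"

end

theory Submission
  imports Defs "HOL-Computational_Algebra.Fundamental_Theorem_Algebra"
begin

text \<open>
  Let \<theta> = x d/dx, so that \<theta>^q x^n = n^q x^n. If \<kappa> is a root of multiplicity greater
  than q of the characteristic polynomial P, then \<theta>^q (x^n P) vanishes at \<kappa>; that is, the
  column sequence \<ell> \<mapsto> \<ell>^q \<kappa>^\<ell> satisfies the linear recurrence with characteristic
  polynomial P. Hence K_(\<ell>+1) = C K_\<ell> for the companion matrix C of this recurrence, whose
  determinant is (-1)^r a_(-r) / (a_0 - z).

  A vector in the left kernel of K_0 is the coefficient vector of a polynomial f of degree
  less than r with (\<theta>^q f)(\<kappa>) = 0 for every column (\<kappa>, q). Since 0 is not a root of P,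
  every root of P is then a root of f of at least the same multiplicity, which is impossible
  for f \<noteq> 0. The hypotheses |a_0| < 1 \<le> |z| enter only through z \<noteq> a_0.
\<close>

definition euler_op :: "'a::{comm_semiring_1,semiring_no_zero_divisors} poly \<Rightarrow> 'a poly" where
  "euler_op f = pCons 0 (pderiv f)"

lemma euler_op_eq_mult: "euler_op f = [:0, 1:] * pderiv f"
  by (simp add: euler_op_def)

lemma coeff_euler_op: "coeff (euler_op f) j = of_nat j * coeff f j"
  by (cases j) (auto simp: euler_op_def coeff_pderiv coeff_pCons)

lemma coeff_euler_op_pow: "coeff ((euler_op ^^ q) f) j = of_nat j ^ q * coeff f j"
  by (induction q) (simp_all add: coeff_euler_op mult.assoc)

lemma poly_eq_sum_atMost:
  fixes p :: "'a::comm_semiring_1 poly"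
  assumes "degree p \<le> N"
  shows "poly p x = (\<Sum>i\<le>N. coeff p i * x ^ i)"
proof -
  have "poly p x = poly (\<Sum>i\<le>N. monom (coeff p i) i) x"
    by (simp only: poly_as_sum_of_monoms'[OF assms])
  then show ?thesis by (simp add: poly_sum poly_monom)
qed

lemma poly_euler_op_pow:
  assumes "degree f \<le> N"
  shows "poly ((euler_op ^^ q) f) x = (\<Sum>i\<le>N. of_nat i ^ q * coeff f i * x ^ i)"
proof -
  have "degree ((euler_op ^^ q) f) \<le> N"
    using assms by (intro degree_le) (auto simp: coeff_euler_op_pow coeff_eq_0)
  then show ?thesis by (simp add: poly_eq_sum_atMost coeff_euler_op_pow)
qed

lemma linear_power_dvd_euler_op:
  fixes f :: "'a::{comm_ring_1,semiring_no_zero_divisors} poly"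
  assumes "[:-k, 1:] ^ Suc n dvd f"
  shows "[:-k, 1:] ^ n dvd euler_op f"
proof -
  obtain g where g: "f = [:-k, 1:] ^ Suc n * g" using assms by blast
  have "pderiv f = [:-k, 1:] ^ Suc n * pderiv g + smult (of_nat (Suc n)) (g * [:-k, 1:] ^ n)"
    unfolding g by (rule lemma_order_pderiv1)
  also have "\<dots> = [:-k, 1:] ^ n * ([:-k, 1:] * pderiv g + smult (of_nat (Suc n)) g)"
    by (simp add: algebra_simps)
  finally show ?thesis by (metis euler_op_eq_mult dvd_mult dvd_triv_left)
qed

lemma linear_power_dvd_euler_op_pow:
  fixes f :: "'a::{comm_ring_1,semiring_no_zero_divisors} poly"
  assumes "[:-k, 1:] ^ (n + q) dvd f"
  shows "[:-k, 1:] ^ n dvd (euler_op ^^ q) f"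
  using assms
proof (induction q arbitrary: f)
  case (Suc q)
  have "[:-k, 1:] ^ (n + q) dvd euler_op f"
    using Suc.prems by (intro linear_power_dvd_euler_op) simp
  then have "[:-k, 1:] ^ n dvd (euler_op ^^ q) (euler_op f)" by (rule Suc.IH)
  then show ?case by (simp only: funpow_Suc_right o_apply)
qed simp

lemma poly_euler_op_pow_eq_0:
  fixes f :: "'a::idom poly"
  assumes "q < order k f"
  shows "poly ((euler_op ^^ q) f) k = 0"
proof -
  have "[:-k, 1:] ^ (1 + q) dvd f"
    unfolding order_divides using assms by simp
  then have "[:-k, 1:] ^ 1 dvd (euler_op ^^ q) f" by (rule linear_power_dvd_euler_op_pow)
  then show ?thesis by (simp add: dvd_iff_poly_eq_0)
qed

lemma order_euler_op:
  fixes f :: "'a::{idom,semiring_char_0} poly"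
  assumes "k \<noteq> 0" "f \<noteq> 0" "order k f = Suc m"
  shows "euler_op f \<noteq> 0" "order k (euler_op f) = m"
proof -
  have root: "poly f k = 0" using assms by (simp add: order_root)
  have "degree f \<noteq> 0"
  proof
    assume "degree f = 0"
    then obtain c where "f = [:c:]" by (meson degree_eq_zeroE)
    then show False using root assms(2) by auto
  qed
  then show nz: "euler_op f \<noteq> 0" by (simp add: euler_op_eq_mult pderiv_eq_0_iff)
  have "order k [:0, 1:] = 0" using assms(1) by (intro order_0I) simp
  then have "order k (euler_op f) = order k (pderiv f)"
    using nz unfolding euler_op_eq_mult by (subst order_mult) auto
  with order_pderiv[OF assms(2) root] assms(3) show "order k (euler_op f) = m" by simp
qed

lemma poly_euler_op_pow_order_neq_0:
  fixes f :: "'a::{idom,semiring_char_0} poly"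
  assumes "k \<noteq> 0" "f \<noteq> 0"
  shows "poly ((euler_op ^^ order k f) f) k \<noteq> 0"
  using assms(2)
proof (induction "order k f" arbitrary: f)
  case 0
  then show ?case using order_root by (metis funpow_0)
next
  case (Suc m)
  note euler = order_euler_op[OF assms(1) Suc.prems Suc.hyps(2)[symmetric]]
  have "(euler_op ^^ order k f) f = (euler_op ^^ m) (euler_op f)"
    by (simp only: Suc.hyps(2)[symmetric] funpow_Suc_right o_apply)
  with Suc.hyps(1)[OF euler(2)[symmetric] euler(1)] euler(2) show ?case by simp
qed

lemma degree_le_if_order_le:
  fixes p f :: "complex poly"
  assumes "f \<noteq> 0" "\<And>k. order k p \<le> order k f"
  shows "degree p \<le> degree f"
proof (cases "p = 0")
  case False
  have "proots p \<subseteq># proots f"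
    by (rule mset_subset_eqI) (use False assms in simp)
  then show ?thesis by (metis size_mset_mono size_proots_complex)
qed simp

lemma euler_op_pow_nonzero_at_some_root:
  fixes p f :: "complex poly"
  assumes "f \<noteq> 0" "poly p 0 \<noteq> 0" "degree f < degree p"
  shows "\<exists>k q. poly p k = 0 \<and> q < order k p \<and> poly ((euler_op ^^ q) f) k \<noteq> 0"
proof (rule ccontr)
  assume vanish: "\<nexists>k q. poly p k = 0 \<and> q < order k p \<and> poly ((euler_op ^^ q) f) k \<noteq> 0"
  have "order k p \<le> order k f" for k
  proof (rule ccontr)
    assume less: "\<not> order k p \<le> order k f"
    then have "poly p k = 0" by (simp add: order_root)
    then have "k \<noteq> 0" using assms(2) by auto
    moreover have "poly ((euler_op ^^ order k f) f) k = 0"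
      using vanish less \<open>poly p k = 0\<close> by (auto simp: not_le)
    ultimately show False using poly_euler_op_pow_order_neq_0[OF _ assms(1)] by blast
  qed
  then have "degree p \<le> degree f" by (rule degree_le_if_order_le[OF assms(1)])
  with assms(3) show False by simp
qed

lemma root_multiplicity_recurrence:
  fixes p :: "'a::idom poly"
  assumes "q < order k p" "degree p \<le> N"
  shows "(\<Sum>j\<le>N. coeff p j * of_nat (n + j) ^ q * k ^ (n + j)) = 0"
proof (cases "p = 0")
  case False
  define g where "g = monom 1 n * p"
  have coeff_g: "coeff g i = (if i < n then 0 else coeff p (i - n))" for i
    by (simp add: g_def coeff_monom_mult)
  from False have "order k p \<le> order k g"
    unfolding g_def by (intro dvd_imp_order_le) (auto simp: monom_eq_0_iff)
  then have "poly ((euler_op ^^ q) g) k = 0"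
    using assms(1) by (intro poly_euler_op_pow_eq_0) simp
  moreover have "degree g \<le> n + N"
    using assms(2) False by (simp add: g_def degree_mult_eq degree_monom_eq)
  ultimately have "0 = (\<Sum>i\<le>n + N. of_nat i ^ q * coeff g i * k ^ i)"
    by (simp add: poly_euler_op_pow)
  also have "\<dots> = (\<Sum>i\<in>{0 + n..N + n}. of_nat i ^ q * coeff g i * k ^ i)"
    by (rule sum.mono_neutral_right) (auto simp: coeff_g)
  also have "\<dots> = (\<Sum>j\<le>N. coeff p j * of_nat (n + j) ^ q * k ^ (n + j))"
    by (simp only: sum.shift_bounds_cl_nat_ivl atLeast0AtMost)
      (simp add: coeff_g mult_ac add.commute)
  finally show ?thesis by simp
qed simp

lemma coeff_char_poly:
  "coeff (char_poly a r z) j = (if j = r then z else 0) - (if j \<le> r then a (int j - int r) else 0)"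
proof -
  have "(\<Sum>k\<in>{-int r..0}. coeff (monom (a k) (nat (int r + k))) j)
      = (\<Sum>k\<in>{-int r..0}. if k = int j - int r then a k else 0)"
    by (rule sum.cong) (auto simp: coeff_monom)
  also have "\<dots> = (if j \<le> r then a (int j - int r) else 0)"
    by (subst sum.delta) auto
  finally show ?thesis
    by (simp add: char_poly_def coeff_diff coeff_sum coeff_monom)
qed

lemma degree_char_poly_le: "degree (char_poly a r z) \<le> r"
  by (rule degree_le) (auto simp: coeff_char_poly)

lemma degree_char_poly:
  assumes "z \<noteq> a 0"
  shows "degree (char_poly a r z) = r"
  using assms by (intro antisym degree_char_poly_le le_degree) (simp add: coeff_char_poly)

lemma poly_char_poly_0:
  assumes "r \<ge> 1"
  shows "poly (char_poly a r z) 0 = - a (- int r)"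
  using assms by (simp add: poly_0_coeff_0 coeff_char_poly)

definition root_seq :: "complex \<times> nat \<Rightarrow> nat \<Rightarrow> complex" where
  "root_seq kq n = of_nat n ^ snd kq * fst kq ^ n"

lemma root_seq_recurrence:
  assumes "kq \<in> K_cols a r z" "z \<noteq> a 0"
  shows "root_seq kq (n + r) = (\<Sum>j<r. a (int j - int r) / (z - a 0) * root_seq kq (n + j))"
proof -
  obtain k q where kq: "kq = (k, q)" "q < order k (char_poly a r z)"
    using assms(1) by (auto simp: K_cols_def)
  have "0 = (\<Sum>j\<le>r. coeff (char_poly a r z) j * of_nat (n + j) ^ q * k ^ (n + j))"
    using root_multiplicity_recurrence[OF kq(2) degree_char_poly_le] by simp
  also have "\<dots> = (z - a 0) * root_seq kq (n + r)
      - (\<Sum>j<r. a (int j - int r) * root_seq kq (n + j))"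
    by (simp add: lessThan_Suc_atMost[symmetric] coeff_char_poly root_seq_def kq(1)
        sum_subtractf algebra_simps)
  finally show ?thesis
    using assms(2) by (simp add: sum_divide_distrib[symmetric] field_simps)
qed

definition window_mat :: "nat \<Rightarrow> (nat \<Rightarrow> nat \<Rightarrow> 'a) \<Rightarrow> nat \<Rightarrow> 'a mat" where
  "window_mat r u l = mat r r (\<lambda>(m, c). u c (l + m))"

definition companion_mat :: "nat \<Rightarrow> (nat \<Rightarrow> 'a::comm_ring_1) \<Rightarrow> 'a mat" where
  "companion_mat r b = mat r r (\<lambda>(i, j). if i < r - 1 then (if j = Suc i then 1 else 0) else b j)"

lemma det_companion_mat:
  assumes "r \<ge> 1"
  shows "det (companion_mat r b) = (-1) ^ (r - 1) * b 0"
proof -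
  obtain s where s: "r = Suc s" using assms by (cases r) auto
  have C: "companion_mat r b \<in> carrier_mat r r" by (simp add: companion_mat_def)
  have "det (companion_mat r b) = (\<Sum>i<r. companion_mat r b $$ (i, 0) * cofactor (companion_mat r b) i 0)"
    by (rule laplace_expansion_column[OF C]) (use assms in auto)
  also have "\<dots> = b 0 * cofactor (companion_mat r b) s 0"
    unfolding s by (simp add: companion_mat_def)
  also have "mat_delete (companion_mat r b) s 0 = 1\<^sub>m s"
    by (rule eq_matI) (auto simp: mat_delete_def companion_mat_def s)
  then have "cofactor (companion_mat r b) s 0 = (-1) ^ s"
    by (simp add: cofactor_def)
  finally show ?thesis by (simp add: s)
qed

lemma window_mat_Suc:
  fixes u :: "nat \<Rightarrow> nat \<Rightarrow> 'a::comm_ring_1"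
  assumes "r \<ge> 1" and rec: "\<And>c n. c < r \<Longrightarrow> u c (n + r) = (\<Sum>j<r. b j * u c (n + j))"
  shows "window_mat r u (Suc l) = companion_mat r b * window_mat r u l"
proof (rule eq_matI)
  fix i c assume "i < dim_row (companion_mat r b * window_mat r u l)"
    and "c < dim_col (companion_mat r b * window_mat r u l)"
  then have i: "i < r" and c: "c < r" by (auto simp: companion_mat_def window_mat_def)
  have "(companion_mat r b * window_mat r u l) $$ (i, c)
      = (\<Sum>m<r. companion_mat r b $$ (i, m) * u c (l + m))"
    using i c by (simp add: companion_mat_def window_mat_def scalar_prod_def atLeast0LessThan)
  also have "\<dots> = u c (Suc l + i)"
  proof (cases "i < r - 1")
    case True
    then have "(\<Sum>m<r. companion_mat r b $$ (i, m) * u c (l + m))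
        = (\<Sum>m<r. if m = Suc i then u c (l + m) else 0)"
      by (intro sum.cong) (auto simp: companion_mat_def)
    with True show ?thesis by simp
  next
    case False
    then have "i = r - 1" using i by simp
    have "(\<Sum>m<r. companion_mat r b $$ (i, m) * u c (l + m)) = (\<Sum>m<r. b m * u c (l + m))"
      using False i by (intro sum.cong) (auto simp: companion_mat_def)
    also have "\<dots> = u c (l + r)" using rec[OF c] by simp
    finally show ?thesis using \<open>i = r - 1\<close> assms(1) by simp
  qed
  finally show "window_mat r u (Suc l) $$ (i, c) = (companion_mat r b * window_mat r u l) $$ (i, c)"
    using i c by (simp add: window_mat_def)
qed (auto simp: window_mat_def companion_mat_def)

lemma det_window_mat:
  fixes u :: "nat \<Rightarrow> nat \<Rightarrow> 'a::comm_ring_1"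
  assumes "r \<ge> 1" and "\<And>c n. c < r \<Longrightarrow> u c (n + r) = (\<Sum>j<r. b j * u c (n + j))"
  shows "det (window_mat r u l) = det (companion_mat r b) ^ l * det (window_mat r u 0)"
proof (induction l)
  case (Suc l)
  have "det (window_mat r u (Suc l)) = det (companion_mat r b * window_mat r u l)"
    using window_mat_Suc[where u = u and b = b, OF assms] by simp
  also have "\<dots> = det (companion_mat r b) * det (window_mat r u l)"
    by (rule det_mult) (auto simp: companion_mat_def window_mat_def)
  finally show ?case using Suc.IH by simp
qed simp

lemma K_mat_eq_window_mat:
  "K_mat r e (int l) (int l + int r - 1) = window_mat r (\<lambda>c. root_seq (e c)) l"
  unfolding K_mat_def window_mat_def root_seq_def
  by (rule cong_mat) (auto simp flip: of_nat_add)

lemma det_window_root_seq_neq_0: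
  assumes "r \<ge> 1" "a (- int r) \<noteq> 0" "z \<noteq> a 0"
    and bij: "bij_betw e {..<r} (K_cols a r z)"
  shows "det (window_mat r (\<lambda>c. root_seq (e c)) 0) \<noteq> 0"
proof
  define P where "P = char_poly a r z"
  define W where "W = window_mat r (\<lambda>c. root_seq (e c)) 0"
  assume "det W = 0"
  have W: "W \<in> carrier_mat r r" by (simp add: W_def window_mat_def)
  with \<open>det W = 0\<close> have "det (transpose_mat W) = 0" by (simp add: det_transpose)
  then obtain v where v: "v \<in> carrier_vec r" "v \<noteq> 0\<^sub>v r" "transpose_mat W *\<^sub>v v = 0\<^sub>v r"
    using det_0_iff_vec_prod_zero[of "transpose_mat W" r] W by auto
  define f where "f = (\<Sum>m<r. monom (v $ m) m)"
  have coeff_f: "coeff f i = (if i < r then v $ i else 0)" for i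
    by (simp add: f_def coeff_sum coeff_monom)
  have "f \<noteq> 0"
  proof
    assume "f = 0"
    then have "v = 0\<^sub>v r" using v(1) coeff_f by (intro eq_vecI) (auto, metis coeff_0)
    with v(2) show False by simp
  qed
  have "degree f \<le> r - 1" by (rule degree_le) (use assms(1) in \<open>auto simp: coeff_f\<close>)
  then have "degree f < degree P"
    using assms(1,3) by (simp add: P_def degree_char_poly)
  moreover have "poly P 0 \<noteq> 0" using assms(1,2) by (simp add: P_def poly_char_poly_0)
  ultimately obtain k q where kq: "poly P k = 0" "q < order k P" "poly ((euler_op ^^ q) f) k \<noteq> 0"
    using euler_op_pow_nonzero_at_some_root[OF \<open>f \<noteq> 0\<close>] by blast
  then have "(k, q) \<in> K_cols a r z" by (simp add: K_cols_def P_def)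
  then obtain c where c: "c < r" "e c = (k, q)"
    using bij unfolding bij_betw_def by (metis imageE lessThan_iff)
  have "{..r - 1} = {..<r}" using assms(1) by auto
  have "poly ((euler_op ^^ q) f) k = (\<Sum>m\<le>r - 1. of_nat m ^ q * coeff f m * k ^ m)"
    using \<open>degree f \<le> r - 1\<close> by (rule poly_euler_op_pow)
  also have "\<dots> = (\<Sum>m<r. root_seq (e c) m * v $ m)"
    using assms(1) c(2) \<open>{..r - 1} = {..<r}\<close>
    by (auto simp: coeff_f root_seq_def mult_ac intro!: sum.cong)
  also have "\<dots> = (transpose_mat W *\<^sub>v v) $ c"
    using c(1) v(1) by (simp add: W_def window_mat_def scalar_prod_def atLeast0LessThan)
  finally show False using kq(3) v(3) c(1) by simp
qed

theorem lemma3p4: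
  fixes r :: nat and a :: "int \<Rightarrow> complex" and z :: complex and l :: nat
    and e :: "nat \<Rightarrow> complex \<times> nat"
  assumes "r \<ge> 1" and "a (- int r) \<noteq> 0" and "norm (a 0) < 1"
    and "norm z \<ge> 1"
    and "bij_betw e {..<r} (K_cols a r z)"
  shows "det (K_mat r e 0 (int r - 1)) \<noteq> 0 \<and>
    det (K_mat r e (int l) (int l + int r - 1)) / det (K_mat r e 0 (int r - 1))
      = (-1) ^ (l * r) * (a (- int r) / (a 0 - z)) ^ l"
proof -
  have "z \<noteq> a 0" using assms(3,4) by auto
  define u where "u c = root_seq (e c)" for c
  define b where "b j = a (int j - int r) / (z - a 0)" for j
  have K: "K_mat r e (int n) (int n + int r - 1) = window_mat r u n" for n
    unfolding u_def by (rule K_mat_eq_window_mat)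
  have nonsing: "det (window_mat r u 0) \<noteq> 0"
    unfolding u_def using det_window_root_seq_neq_0 assms \<open>z \<noteq> a 0\<close> by blast
  have "u c (n + r) = (\<Sum>j<r. b j * u c (n + j))" if "c < r" for c n
  proof -
    have "e c \<in> K_cols a r z" using bij_betw_apply[OF assms(5)] that by simp
    from root_seq_recurrence[OF this \<open>z \<noteq> a 0\<close>] show ?thesis by (simp add: u_def b_def)
  qed
  then have "det (window_mat r u l) = det (companion_mat r b) ^ l * det (window_mat r u 0)"
    using assms(1) by (rule det_window_mat[rotated])
  then have "det (window_mat r u l) / det (window_mat r u 0) = det (companion_mat r b) ^ l"
    using nonsing by simp
  also have "det (companion_mat r b) = (-1) ^ r * (a (- int r) / (a 0 - z))"
    using assms(1) \<open>z \<noteq> a 0\<close>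
    by (cases r) (auto simp: det_companion_mat b_def field_simps)
  also have "((-1) ^ r * (a (- int r) / (a 0 - z))) ^ l
      = (-1) ^ (l * r) * (a (- int r) / (a 0 - z)) ^ l"
    by (simp only: power_mult_distrib power_mult[symmetric] mult.commute)
  finally show ?thesis using K[of 0] K[of l] nonsing by simp
qed

end
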